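(* Let $D_\infty=\mathbb{Z}/2\ast\mathbb{Z}/2$ be the infinite dihedral group. There is no finite generating set $S$ of $D_\infty$ (with $S=S^{-1}$, $e\notin S$) with respect to which $\kappa(g)=0$ for all $g\in D_\infty\smallsetminus\{e\}$.
   Context: For a group $G$ with finite generating set $S$ ($S=S^{-1}$, $e\notin S$), $|x|$ denotes the word length of $x\in G$ with respect to $S$. For $g\in G$ define $\mathrm{Av}(g)=\frac{1}{|S|}\sum_{a\in S}|a^{-1}ga|$, and for $g\neq e$ define the curvature $\kappa(g)=\frac{|g|-\mathrm{Av}(g)}{|g|}$. *)

theory Defs
  imports "HOL-Algebra.Group" "HOL-Algebra.Generated_Groups" Complex_Main
begin

definition word_length :: "('a, 'b) monoid_scheme \<Rightarrow> 'a set \<Rightarrow> 'a \<Rightarrow> nat" where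
  "word_length G S g =
     (LEAST n. \<exists>ws. length ws = n \<and> set ws \<subseteq> S \<and> foldr (\<otimes>\<^bsub>G\<^esub>) ws \<one>\<^bsub>G\<^esub> = g)"

definition Av :: "('a, 'b) monoid_scheme \<Rightarrow> 'a set \<Rightarrow> 'a \<Rightarrow> real" where
  "Av G S g = (1 / real (card S)) *
     (\<Sum>a\<in>S. real (word_length G S (inv\<^bsub>G\<^esub> a \<otimes>\<^bsub>G\<^esub> g \<otimes>\<^bsub>G\<^esub> a)))"

definition curvature :: "('a, 'b) monoid_scheme \<Rightarrow> 'a set \<Rightarrow> 'a \<Rightarrow> real" where
  "curvature G S g = (real (word_length G S g) - Av G S g) / real (word_length G S g)"

definition fin_sym_gen_set :: "('a, 'b) monoid_scheme \<Rightarrow> 'a set \<Rightarrow> bool" where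
  "fin_sym_gen_set G S \<longleftrightarrow> S \<subseteq> carrier G \<and> finite S \<and> generate G S = carrier G \<and>
     (\<forall>a\<in>S. inv\<^bsub>G\<^esub> a \<in> S) \<and> \<one>\<^bsub>G\<^esub> \<notin> S"

text \<open>The infinite dihedral group Z/2 * Z/2, realised as the isometry group of the
  integers: (n, b) is the map x \<mapsto> (if b then -x else x) + n; the product is composition.
  It is generated by the two involutions (0, True) and (1, True).\<close>
definition D_inf :: "(int \<times> bool) monoid" where
  "D_inf = \<lparr> carrier = UNIV,
             mult = (\<lambda>(n, b) (m, c). (n + (if b then - m else m), b \<noteq> c)),
             one = (0, False) \<rparr>"

lemma group_D_inf: "group D_inf"
proof (rule groupI)
  fix x assume "x \<in> carrier D_inf"
  obtain n b where x: "x = (n, b)" by fastforce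
  show "\<exists>y\<in>carrier D_inf. y \<otimes>\<^bsub>D_inf\<^esub> x = \<one>\<^bsub>D_inf\<^esub>"
    by (rule bexI[where x="(if b then n else - n, b)"]) (auto simp: D_inf_def x)
qed (auto simp: D_inf_def split: prod.splits)

end

theory Submission
  imports Defs
begin

text \<open>Every generator has length 1, so zero curvature at a generator g forces the average
  length of its conjugates a\<inverse> g a (a \<in> S) to be 1; since no conjugate is trivial, each of
  them has length exactly 1, i.e. lies in S. Hence S is closed under conjugation by S, and so
  under conjugation by the whole group. In the infinite dihedral group some generator must be a
  reflection, and the conjugacy class of a reflection is infinite, contradicting finiteness of S.\<close>

context group
begin

lemma foldr_mult_closed:
  "set ws \<subseteq> carrier G \<Longrightarrow> y \<in> carrier G \<Longrightarrow> foldr (\<otimes>) ws y \<in> carrier G"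
  by (induction ws) auto

lemma foldr_mult_eq_mult_foldr_one:
  assumes "set ws \<subseteq> carrier G" "y \<in> carrier G"
  shows "foldr (\<otimes>) ws y = foldr (\<otimes>) ws \<one> \<otimes> y"
  using assms(1)
proof (induction ws)
  case (Cons a ws)
  with assms(2) show ?case by (simp add: m_assoc foldr_mult_closed)
qed (use assms(2) in simp)

lemma generate_eq_word_products:
  assumes "S \<subseteq> carrier G" "\<forall>a\<in>S. inv a \<in> S" "x \<in> generate G S"
  shows "\<exists>ws. set ws \<subseteq> S \<and> foldr (\<otimes>) ws \<one> = x"
  using assms(3)
proof (induction rule: generate.induct)
  case one
  show ?case by (rule exI[of _ "[]"]) simp
next
  case (incl h)
  then show ?case using assms(1) by (intro exI[of _ "[h]"]) auto
next
  case (inv h)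
  then show ?case using assms by (intro exI[of _ "[inv h]"]) auto
next
  case (eng h1 h2)
  then obtain w1 w2 where "set w1 \<subseteq> S" "foldr (\<otimes>) w1 \<one> = h1"
    "set w2 \<subseteq> S" "foldr (\<otimes>) w2 \<one> = h2" by blast
  moreover have "h2 \<in> carrier G"
    using eng.hyps(2) assms(1) generate_in_carrier by blast
  ultimately show ?case
    using assms(1) foldr_mult_eq_mult_foldr_one[of w1 h2]
    by (intro exI[of _ "w1 @ w2"]) auto
qed

lemma word_length_attained:
  assumes "S \<subseteq> carrier G" "\<forall>a\<in>S. inv a \<in> S" "x \<in> generate G S"
  obtains ws where "length ws = word_length G S x" "set ws \<subseteq> S" "foldr (\<otimes>) ws \<one> = x"
proof -
  have "\<exists>n ws. length ws = n \<and> set ws \<subseteq> S \<and> foldr (\<otimes>) ws \<one> = x"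
    using generate_eq_word_products[OF assms] by blast
  then have "\<exists>ws. length ws = word_length G S x \<and> set ws \<subseteq> S \<and> foldr (\<otimes>) ws \<one> = x"
    unfolding word_length_def by (rule LeastI_ex)
  with that show ?thesis by blast
qed

lemma word_length_ge_one:
  assumes "S \<subseteq> carrier G" "\<forall>a\<in>S. inv a \<in> S" "x \<in> generate G S" "x \<noteq> \<one>"
  shows "word_length G S x \<ge> 1"
proof -
  obtain ws where "length ws = word_length G S x" "foldr (\<otimes>) ws \<one> = x"
    using word_length_attained[OF assms(1-3)] by blast
  with assms(4) show ?thesis by (cases ws) auto
qed

lemma word_length_le_one:
  assumes "x \<in> S" "S \<subseteq> carrier G"
  shows "word_length G S x \<le> 1"
  unfolding word_length_def
  by (rule Least_le) (rule exI[of _ "[x]"], use assms in auto)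

lemma word_length_eq_one_imp_mem:
  assumes "S \<subseteq> carrier G" "\<forall>a\<in>S. inv a \<in> S" "x \<in> generate G S"
    and "word_length G S x = 1"
  shows "x \<in> S"
proof -
  obtain ws where "length ws = 1" "set ws \<subseteq> S" "foldr (\<otimes>) ws \<one> = x"
    using word_length_attained[OF assms(1-3)] assms(4) by metis
  with assms(1) show ?thesis by (cases ws) auto
qed

lemma conj_eq_one_iff:
  assumes "a \<in> carrier G" "g \<in> carrier G"
  shows "inv a \<otimes> g \<otimes> a = \<one> \<longleftrightarrow> g = \<one>"
proof -
  have "g = a \<otimes> (inv a \<otimes> g \<otimes> a) \<otimes> inv a"
    using assms by (simp add: m_assoc flip: m_assoc[of a "inv a"])
  with assms show ?thesis by auto
qed

lemma flat_conj_closed: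
  assumes S: "fin_sym_gen_set G S"
    and flat: "curvature G S g = 0" and g: "g \<in> S" and a: "a \<in> S"
  shows "inv a \<otimes> g \<otimes> a \<in> S"
proof -
  from S have sub: "S \<subseteq> carrier G" and sym: "\<forall>a\<in>S. inv a \<in> S"
    and gen: "generate G S = carrier G" and fin: "finite S" and "\<one> \<notin> S"
    unfolding fin_sym_gen_set_def by auto
  define len where "len b = real (word_length G S (inv b \<otimes> g \<otimes> b))" for b
  have "g \<noteq> \<one>" using g \<open>\<one> \<notin> S\<close> by auto
  have conj_gen: "inv b \<otimes> g \<otimes> b \<in> generate G S" if "b \<in> S" for b
    using that g sub unfolding gen by blast
  have len_ge: "len b \<ge> 1" if "b \<in> S" for b
  proof -
    have "inv b \<otimes> g \<otimes> b \<noteq> \<one>"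
      using conj_eq_one_iff \<open>g \<noteq> \<one>\<close> g that sub by blast
    then show ?thesis
      unfolding len_def using word_length_ge_one[OF sub sym conj_gen[OF that]] by simp
  qed
  have "word_length G S g = 1"
    using word_length_ge_one[OF sub sym generate.incl[OF g] \<open>g \<noteq> \<one>\<close>]
      word_length_le_one[OF g sub] by linarith
  with flat have "Av G S g = 1" unfolding curvature_def by simp
  moreover have "card S > 0" using g fin card_gt_0_iff by blast
  ultimately have "(\<Sum>b\<in>S. len b) = card S"
    unfolding Av_def len_def by (simp add: field_simps)
  then have "(\<Sum>b\<in>S. len b - 1) = 0"
    by (simp add: sum_subtractf)
  then have "len a = 1"
    using sum_nonneg_eq_0_iff[OF fin, of "\<lambda>b. len b - 1"] len_ge a by simp
  then show ?thesis
    unfolding len_def using word_length_eq_one_imp_mem[OF sub sym conj_gen[OF a]] by simp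
qed

lemma conj_closed_generate:
  assumes "S \<subseteq> carrier G" "\<forall>a\<in>S. inv a \<in> S"
    and closed: "\<And>g a. g \<in> S \<Longrightarrow> a \<in> S \<Longrightarrow> inv a \<otimes> g \<otimes> a \<in> S"
    and "h \<in> generate G S" "g \<in> S"
  shows "inv h \<otimes> g \<otimes> h \<in> S"
  using assms(4,5)
proof (induction arbitrary: g rule: generate.induct)
  case one
  then show ?case using assms(1) by auto
next
  case (incl h)
  then show ?case using closed by blast
next
  case (inv h)
  then show ?case using assms(2) closed by blast
next
  case (eng h1 h2)
  have "h1 \<in> carrier G" "h2 \<in> carrier G"
    using eng.hyps assms(1) generate_in_carrier by blast+
  moreover have "g \<in> carrier G" using eng.prems assms(1) by blast
  ultimately have "inv (h1 \<otimes> h2) \<otimes> g \<otimes> (h1 \<otimes> h2) = inv h2 \<otimes> (inv h1 \<otimes> g \<otimes> h1) \<otimes> h2"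
    by (simp add: inv_mult_group m_assoc)
  then show ?case using eng by simp
qed

end

lemma D_inf_mult [simp]: "(n, b) \<otimes>\<^bsub>D_inf\<^esub> (m, c) = (n + (if b then - m else m), b \<noteq> c)"
  by (simp add: D_inf_def)

lemma D_inf_one [simp]: "\<one>\<^bsub>D_inf\<^esub> = (0, False)"
  by (simp add: D_inf_def)

lemma D_inf_carrier [simp]: "carrier D_inf = UNIV"
  by (simp add: D_inf_def)

lemma D_inf_inv [simp]: "inv\<^bsub>D_inf\<^esub> (n, b) = (if b then n else - n, b)"
  by (rule group.inv_equality[OF group_D_inf]) auto

lemma generate_D_inf_subset_translations:
  assumes "\<forall>x\<in>S. \<not> snd x"
  shows "generate D_inf S \<subseteq> {x. \<not> snd x}"
proof
  fix x assume "x \<in> generate D_inf S"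
  then show "x \<in> {x. \<not> snd x}"
    by (induction rule: generate.induct) (use assms in \<open>auto split: prod.splits\<close>)
qed

lemma D_inf_generating_set_has_reflection:
  assumes "generate D_inf S = carrier D_inf"
  obtains m where "(m, True) \<in> S"
proof -
  have "(0, True) \<in> generate D_inf S" using assms by simp
  then have "\<not> (\<forall>x\<in>S. \<not> snd x)"
    using generate_D_inf_subset_translations by fastforce
  with that show ?thesis by auto
qed

lemma D_inf_reflection_conj_translation:
  "inv\<^bsub>D_inf\<^esub> (k, False) \<otimes>\<^bsub>D_inf\<^esub> (m, True) \<otimes>\<^bsub>D_inf\<^esub> (k, False) = (m - 2 * k, True)"
  by simp

lemma infinite_reflection_class: "infinite (range (\<lambda>k. (m - 2 * k :: int, True)))"
proof
  assume "finite (range (\<lambda>k. (m - 2 * k, True)))"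
  then have "finite (UNIV :: int set)"
    by (rule finite_imageD) (auto intro: inj_onI)
  then show False by simp
qed

theorem mainTheorem5:
  shows "\<not> (\<exists>S. fin_sym_gen_set D_inf S \<and>
              (\<forall>g \<in> carrier D_inf. g \<noteq> \<one>\<^bsub>D_inf\<^esub> \<longrightarrow> curvature D_inf S g = 0))"
proof
  assume "\<exists>S. fin_sym_gen_set D_inf S \<and>
              (\<forall>g \<in> carrier D_inf. g \<noteq> \<one>\<^bsub>D_inf\<^esub> \<longrightarrow> curvature D_inf S g = 0)"
  then obtain S where S: "fin_sym_gen_set D_inf S"
    and flat: "\<forall>g \<in> carrier D_inf. g \<noteq> \<one>\<^bsub>D_inf\<^esub> \<longrightarrow> curvature D_inf S g = 0" by blast
  then have sub: "S \<subseteq> carrier D_inf" and sym: "\<forall>a\<in>S. inv\<^bsub>D_inf\<^esub> a \<in> S"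
    and gen: "generate D_inf S = carrier D_inf" and "finite S" and "\<one>\<^bsub>D_inf\<^esub> \<notin> S"
    unfolding fin_sym_gen_set_def by auto
  have closed: "inv\<^bsub>D_inf\<^esub> a \<otimes>\<^bsub>D_inf\<^esub> g \<otimes>\<^bsub>D_inf\<^esub> a \<in> S" if "g \<in> S" "a \<in> S" for g a
  proof -
    have "curvature D_inf S g = 0" using flat sub that(1) \<open>\<one>\<^bsub>D_inf\<^esub> \<notin> S\<close> by (metis subsetD)
    then show ?thesis using that by (rule group.flat_conj_closed[OF group_D_inf S])
  qed
  obtain m where m: "(m, True) \<in> S"
    using D_inf_generating_set_has_reflection[OF gen] by blast
  have "(m - 2 * k, True) \<in> S" for k
  proof -
    have "(k, False) \<in> generate D_inf S" using gen by simp
    with m have "inv\<^bsub>D_inf\<^esub> (k, False) \<otimes>\<^bsub>D_inf\<^esub> (m, True) \<otimes>\<^bsub>D_inf\<^esub> (k, False) \<in> S"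
      using group.conj_closed_generate[OF group_D_inf sub sym] closed by blast
    then show ?thesis by (simp only: D_inf_reflection_conj_translation)
  qed
  then have "range (\<lambda>k. (m - 2 * k, True)) \<subseteq> S" by blast
  then show False
    using infinite_reflection_class \<open>finite S\<close> finite_subset by blast
qed

end
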